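(* Let $q\in\Bbbk^\times$. (1) The linear map $\phi:A(q)\to A(q^{-1})$ with $\phi(e_1)=e_1$, $\phi(e_2)=e_2$, $\phi(a)=c$, $\phi(b)=d$, $\phi(c)=a$, $\phi(d)=b$ extends to an isomorphism. (2) The linear map $\psi:A(q)\to A(q^{-1})$ with $\psi(e_1)=e_2$, $\psi(e_2)=e_1$, $\psi(a)=qb$, $\psi(b)=a$, $\psi(c)=d$, $\psi(d)=c$ extends to an isomorphism.
   Context: $\Bbbk$ is an algebraically closed field of characteristic zero. Paths are written left to right. Let $Q$ be the quiver with vertices $e_1,e_2$, arrows $a,c:e_1\to e_2$ and $b,d:e_2\to e_1$; $A(q)=\Bbbk Q/(ab-cd,\ ba-q\,dc)$. *)

theory Defs
  imports Main "HOL-Computational_Algebra.Polynomial"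
begin

text \<open>Paths are written left to right and represented as a start vertex together with
  a list of composable arrows; the trivial path at v is (v, []).\<close>

datatype vert = V1 | V2
datatype arr = Aa | Ab | Ac | Ad

fun src :: "arr \<Rightarrow> vert" where
  "src Aa = V1" | "src Ac = V1" | "src Ab = V2" | "src Ad = V2"

fun tgt :: "arr \<Rightarrow> vert" where
  "tgt Aa = V2" | "tgt Ac = V2" | "tgt Ab = V1" | "tgt Ad = V1"

type_synonym path = "vert \<times> arr list"

fun composable :: "vert \<Rightarrow> arr list \<Rightarrow> bool" where
  "composable v [] = True"
| "composable v (x # xs) = (src x = v \<and> composable (tgt x) xs)"

fun pend :: "vert \<Rightarrow> arr list \<Rightarrow> vert" where
  "pend v [] = v"
| "pend v (x # xs) = pend (tgt x) xs"

definition valid_path :: "path \<Rightarrow> bool" where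
  "valid_path p = composable (fst p) (snd p)"

definition kQ :: "(path \<Rightarrow> 'k::field) set" where
  "kQ = {f. finite {p. f p \<noteq> 0} \<and> (\<forall>p. f p \<noteq> 0 \<longrightarrow> valid_path p)}"

text \<open>Multiplication = concatenation of paths (left to right), extended bilinearly;
  non-composable products are zero.\<close>

definition pmult :: "(path \<Rightarrow> 'k::field) \<Rightarrow> (path \<Rightarrow> 'k) \<Rightarrow> (path \<Rightarrow> 'k)" where
  "pmult f g = (\<lambda>(v, xs). \<Sum>i\<le>length xs. f (v, take i xs) * g (pend v (take i xs), drop i xs))"

definition padd :: "(path \<Rightarrow> 'k::field) \<Rightarrow> (path \<Rightarrow> 'k) \<Rightarrow> (path \<Rightarrow> 'k)" where
  "padd f g = (\<lambda>p. f p + g p)"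

definition psub :: "(path \<Rightarrow> 'k::field) \<Rightarrow> (path \<Rightarrow> 'k) \<Rightarrow> (path \<Rightarrow> 'k)" where
  "psub f g = (\<lambda>p. f p - g p)"

definition psmult :: "'k::field \<Rightarrow> (path \<Rightarrow> 'k) \<Rightarrow> (path \<Rightarrow> 'k)" where
  "psmult c f = (\<lambda>p. c * f p)"

definition pzero :: "path \<Rightarrow> 'k::field" where
  "pzero = (\<lambda>p. 0)"

definition pone :: "path \<Rightarrow> 'k::field" where
  "pone = (\<lambda>p. if snd p = [] then 1 else 0)"

definition basis :: "path \<Rightarrow> path \<Rightarrow> 'k::field" where
  "basis p = (\<lambda>r. if r = p then 1 else 0)"

definition e1 :: "path \<Rightarrow> 'k::field" where "e1 = basis (V1, [])"
definition e2 :: "path \<Rightarrow> 'k::field" where "e2 = basis (V2, [])"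
definition ga :: "path \<Rightarrow> 'k::field" where "ga = basis (V1, [Aa])"
definition gb :: "path \<Rightarrow> 'k::field" where "gb = basis (V2, [Ab])"
definition gc :: "path \<Rightarrow> 'k::field" where "gc = basis (V1, [Ac])"
definition gd :: "path \<Rightarrow> 'k::field" where "gd = basis (V2, [Ad])"

inductive_set ideal_gen :: "(path \<Rightarrow> 'k::field) set \<Rightarrow> (path \<Rightarrow> 'k) set"
  for R :: "(path \<Rightarrow> 'k) set" where
  zero: "pzero \<in> ideal_gen R"
| gen: "\<lbrakk>r \<in> R; x \<in> kQ; y \<in> kQ\<rbrakk> \<Longrightarrow> pmult (pmult x r) y \<in> ideal_gen R"
| add: "\<lbrakk>u \<in> ideal_gen R; w \<in> ideal_gen R\<rbrakk> \<Longrightarrow> padd u w \<in> ideal_gen R"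

text \<open>The ideal of relations of A(q) = kQ / (ab - cd, ba - q dc).\<close>

definition relI :: "'k::field \<Rightarrow> (path \<Rightarrow> 'k) set" where
  "relI q = ideal_gen {psub (pmult ga gb) (pmult gc gd),
                       psub (pmult gb ga) (psmult q (pmult gd gc))}"

text \<open>A k-algebra homomorphism F : kQ -> kQ induces an isomorphism
  A(q) = kQ/relI q  ->  A(q') = kQ/relI q' iff it maps relI q into relI q'
  (well defined), the induced map is injective and surjective.\<close>

definition alg_hom_kQ :: "((path \<Rightarrow> 'k::field) \<Rightarrow> (path \<Rightarrow> 'k)) \<Rightarrow> bool" where
  "alg_hom_kQ F \<longleftrightarrow>
     (\<forall>x\<in>kQ. F x \<in> kQ)
   \<and> (\<forall>x\<in>kQ. \<forall>y\<in>kQ. F (padd x y) = padd (F x) (F y))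
   \<and> (\<forall>c. \<forall>x\<in>kQ. F (psmult c x) = psmult c (F x))
   \<and> (\<forall>x\<in>kQ. \<forall>y\<in>kQ. F (pmult x y) = pmult (F x) (F y))
   \<and> F pone = pone"

definition induces_iso :: "'k::field \<Rightarrow> 'k \<Rightarrow> ((path \<Rightarrow> 'k) \<Rightarrow> (path \<Rightarrow> 'k)) \<Rightarrow> bool" where
  "induces_iso q q' F \<longleftrightarrow>
     alg_hom_kQ F
   \<and> (\<forall>x\<in>kQ. x \<in> relI q \<longrightarrow> F x \<in> relI q')
   \<and> (\<forall>x\<in>kQ. F x \<in> relI q' \<longrightarrow> x \<in> relI q)
   \<and> (\<forall>y\<in>kQ. \<exists>x\<in>kQ. psub (F x) y \<in> relI q')"

end

theory Submission
  imports Defs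
begin

text \<open>Both maps are induced by an involution of the quiver (\<open>\<phi>\<close> fixes the vertices and
  swaps \<open>a \<leftrightarrow> c\<close>, \<open>b \<leftrightarrow> d\<close>; \<open>\<psi>\<close> swaps the vertices and \<open>a \<leftrightarrow> b\<close>, \<open>c \<leftrightarrow> d\<close>), twisted by
  rescaling one arrow. Such a twisted relabelling is an algebra automorphism of \<open>kQ\<close> whose
  inverse is again a twisted relabelling, and a direct computation shows that it sends each
  defining relation of \<open>A(q)\<close> to a scalar multiple of a defining relation of \<open>A(q\<inverse>)\<close>, and
  its inverse does the converse. Hence it descends to an isomorphism of the quotients.\<close>

section \<open>The path algebra\<close>

lemma sum_triangle_swap:
  fixes T :: "nat \<Rightarrow> nat \<Rightarrow> 'a::comm_monoid_add"
  shows "(\<Sum>i\<le>n. \<Sum>j\<le>i. T j i) = (\<Sum>j\<le>n. \<Sum>k\<le>n - j. T j (j + k))"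
  by (simp add: sum.Sigma)
     (rule sum.reindex_bij_witness[where i="\<lambda>(j, k). (j + k, j)" and j="\<lambda>(i, j). (j, i - j)"]; auto)

lemma pend_append: "pend v (xs @ ys) = pend (pend v xs) ys"
  by (induction xs arbitrary: v) auto

lemma composable_append:
  "composable v (xs @ ys) \<longleftrightarrow> composable v xs \<and> composable (pend v xs) ys"
  by (induction xs arbitrary: v) auto

lemma pmult_pmult_left_eq:
  "pmult (pmult f g) h (v, xs) =
     (\<Sum>i\<le>length xs. \<Sum>j\<le>i. f (v, take j xs) * g (pend v (take j xs), drop j (take i xs))
        * h (pend v (take i xs), drop i xs))"
proof -
  have "pmult f g (v, take i xs) =
      (\<Sum>j\<le>i. f (v, take j xs) * g (pend v (take j xs), drop j (take i xs)))"
    if "i \<le> length xs" for i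
    using that by (simp add: pmult_def min_absorb2)
  then show ?thesis
    by (simp add: pmult_def sum_distrib_right)
qed

lemma pmult_pmult_right_eq:
  "pmult f (pmult g h) (v, xs) =
     (\<Sum>j\<le>length xs. \<Sum>k\<le>length xs - j. f (v, take j xs) * g (pend v (take j xs), take k (drop j xs))
        * h (pend v (take (j + k) xs), drop (j + k) xs))"
proof -
  have "pmult g h (pend v (take j xs), drop j xs) =
      (\<Sum>k\<le>length xs - j. g (pend v (take j xs), take k (drop j xs))
        * h (pend v (take (j + k) xs), drop (j + k) xs))" for j
  proof -
    have "drop (j + k) xs = drop k (drop j xs)" for k
      by (simp add: add.commute)
    then show ?thesis
      by (simp add: pmult_def take_add pend_append del: drop_drop)
  qed
  then show ?thesis
    by (simp add: pmult_def[of f] sum_distrib_left mult.assoc)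
qed

lemma pmult_assoc: "pmult (pmult f g) h = pmult f (pmult g h)"
proof (intro ext, clarify)
  fix v xs
  show "pmult (pmult f g) h (v, xs) = pmult f (pmult g h) (v, xs)"
    unfolding pmult_pmult_left_eq pmult_pmult_right_eq
    using sum_triangle_swap[where T="\<lambda>j i. f (v, take j xs)
      * g (pend v (take j xs), drop j (take i xs)) * h (pend v (take i xs), drop i xs)"]
    by (simp add: drop_take)
qed

lemma pmult_pone_left: "pmult pone f = f"
proof (intro ext, clarify)
  fix v xs
  have "pmult pone f (v, xs) = (\<Sum>i\<le>length xs. pone (v, take i xs) * f (pend v (take i xs), drop i xs))"
    by (simp add: pmult_def)
  also have "\<dots> = (\<Sum>i\<le>length xs. if i = 0 then f (v, xs) else 0)"
    by (rule sum.cong[OF refl]) (auto simp: pone_def)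
  also have "\<dots> = f (v, xs)"
    by (simp add: sum.delta)
  finally show "pmult pone f (v, xs) = f (v, xs)" .
qed

lemma pmult_pone_right: "pmult f pone = f"
proof (intro ext, clarify)
  fix v xs
  have "pmult f pone (v, xs) = (\<Sum>i\<le>length xs. f (v, take i xs) * pone (pend v (take i xs), drop i xs))"
    by (simp add: pmult_def)
  also have "\<dots> = (\<Sum>i\<le>length xs. if i = length xs then f (v, xs) else 0)"
    by (rule sum.cong[OF refl]) (auto simp: pone_def)
  also have "\<dots> = f (v, xs)"
    by (simp add: sum.delta)
  finally show "pmult f pone (v, xs) = f (v, xs)" .
qed

lemma pmult_padd_right: "pmult x (padd u w) = padd (pmult x u) (pmult x w)"
  by (auto simp: pmult_def padd_def fun_eq_iff distrib_left sum.distrib)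

lemma pmult_padd_left: "pmult (padd u w) x = padd (pmult u x) (pmult w x)"
  by (auto simp: pmult_def padd_def fun_eq_iff distrib_right sum.distrib)

lemma pmult_pzero_right: "pmult x pzero = pzero"
  by (auto simp: pmult_def pzero_def fun_eq_iff)

lemma pmult_pzero_left: "pmult pzero x = pzero"
  by (auto simp: pmult_def pzero_def fun_eq_iff)

lemma pmult_psmult_left: "pmult (psmult c x) y = psmult c (pmult x y)"
  by (auto simp: pmult_def psmult_def fun_eq_iff sum_distrib_left mult.assoc)

lemma pmult_psmult_right: "pmult x (psmult c y) = psmult c (pmult x y)"
  by (auto simp: pmult_def psmult_def fun_eq_iff sum_distrib_left mult.left_commute)

lemma psmult_pzero: "psmult c pzero = pzero"
  by (simp add: psmult_def pzero_def)

lemma psmult_padd: "psmult c (padd u w) = padd (psmult c u) (psmult c w)"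
  by (simp add: psmult_def padd_def fun_eq_iff distrib_left)

lemma psmult_one: "psmult 1 f = f"
  by (simp add: psmult_def)

lemma psub_self: "psub f f = pzero"
  by (simp add: psub_def pzero_def)

lemma basis_kQ: "valid_path p \<Longrightarrow> basis p \<in> kQ"
  by (simp add: kQ_def basis_def)

lemma pone_kQ: "(pone :: path \<Rightarrow> 'k::field) \<in> kQ"
proof -
  have "{p. (pone :: path \<Rightarrow> 'k::field) p \<noteq> 0} \<subseteq> {(V1, []), (V2, [])}"
    by (auto simp: pone_def) (metis vert.exhaust)
  then have "finite {p. (pone :: path \<Rightarrow> 'k) p \<noteq> 0}"
    by (rule finite_subset) simp
  then show ?thesis
    unfolding kQ_def by (auto simp: pone_def valid_path_def)
qed

lemma padd_kQ:
  assumes "x \<in> kQ" and "y \<in> kQ"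
  shows "padd x y \<in> kQ"
proof -
  have "{p. padd x y p \<noteq> 0} \<subseteq> {p. x p \<noteq> 0} \<union> {p. y p \<noteq> 0}"
    by (auto simp: padd_def)
  with assms show ?thesis
    unfolding kQ_def by (auto simp: padd_def intro: finite_subset)
qed

lemma psmult_kQ: "x \<in> kQ \<Longrightarrow> psmult c x \<in> kQ"
  unfolding kQ_def psmult_def by (auto intro: finite_subset)

lemma psub_kQ:
  assumes "x \<in> kQ" and "y \<in> kQ"
  shows "psub x y \<in> kQ"
proof -
  have "psub x y = padd x (psmult (-1) y)"
    by (simp add: psub_def padd_def psmult_def)
  with assms show ?thesis
    by (simp add: padd_kQ psmult_kQ)
qed

lemma pmult_nonzero_split:
  assumes "pmult f g (v, xs) \<noteq> 0"
  obtains i where "f (v, take i xs) \<noteq> 0" "g (pend v (take i xs), drop i xs) \<noteq> 0"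
proof -
  obtain i where "f (v, take i xs) * g (pend v (take i xs), drop i xs) \<noteq> 0"
    using assms unfolding pmult_def by (auto elim: sum.not_neutral_contains_not_neutral)
  then show thesis
    by (intro that) auto
qed

lemma pmult_kQ:
  assumes f: "f \<in> kQ" and g: "g \<in> kQ"
  shows "pmult f g \<in> kQ"
proof -
  let ?concat = "\<lambda>((v, xs), (_, ys)). (v, xs @ ys)"
  have support: "{p. pmult f g p \<noteq> 0} \<subseteq> ?concat ` ({p. f p \<noteq> 0} \<times> {p. g p \<noteq> 0})"
  proof clarify
    fix v xs assume "pmult f g (v, xs) \<noteq> 0"
    then obtain i where "f (v, take i xs) \<noteq> 0" "g (pend v (take i xs), drop i xs) \<noteq> 0"
      by (rule pmult_nonzero_split)
    then show "(v, xs) \<in> ?concat ` ({p. f p \<noteq> 0} \<times> {p. g p \<noteq> 0})"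
      by (intro image_eqI[where x="((v, take i xs), (pend v (take i xs), drop i xs))"]) auto
  qed
  have "valid_path (v, xs)" if nonzero: "pmult f g (v, xs) \<noteq> 0" for v xs
  proof -
    obtain i where "f (v, take i xs) \<noteq> 0" "g (pend v (take i xs), drop i xs) \<noteq> 0"
      using nonzero by (rule pmult_nonzero_split)
    with f g have "composable v (take i xs)" "composable (pend v (take i xs)) (drop i xs)"
      by (auto simp: kQ_def valid_path_def)
    then have "composable v (take i xs @ drop i xs)"
      by (simp only: composable_append)
    then show ?thesis
      by (simp add: valid_path_def)
  qed
  moreover have "finite {p. f p \<noteq> 0}" "finite {p. g p \<noteq> 0}"
    using f g by (auto simp: kQ_def)
  ultimately show ?thesis
    unfolding kQ_def using finite_subset[OF support] by auto
qed

section \<open>Two-sided ideals\<close>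

lemma ideal_gen_psmult: "u \<in> ideal_gen R \<Longrightarrow> psmult c u \<in> ideal_gen R"
proof (induction rule: ideal_gen.induct)
  case zero
  then show ?case by (simp add: psmult_pzero ideal_gen.zero)
next
  case (gen r x y)
  then have "pmult (pmult (psmult c x) r) y \<in> ideal_gen R"
    by (simp add: ideal_gen.gen psmult_kQ)
  then show ?case
    by (simp add: pmult_psmult_left)
next
  case (add u w)
  then show ?case by (simp add: psmult_padd ideal_gen.add)
qed

lemma ideal_gen_pmult_left: "u \<in> ideal_gen R \<Longrightarrow> z \<in> kQ \<Longrightarrow> pmult z u \<in> ideal_gen R"
proof (induction rule: ideal_gen.induct)
  case zero
  then show ?case by (simp add: pmult_pzero_right ideal_gen.zero)
next
  case (gen r x y)
  then have "pmult (pmult (pmult z x) r) y \<in> ideal_gen R"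
    by (simp add: ideal_gen.gen pmult_kQ)
  then show ?case
    by (simp add: pmult_assoc)
next
  case (add u w)
  then show ?case by (simp add: pmult_padd_right ideal_gen.add)
qed

lemma ideal_gen_pmult_right: "u \<in> ideal_gen R \<Longrightarrow> z \<in> kQ \<Longrightarrow> pmult u z \<in> ideal_gen R"
proof (induction rule: ideal_gen.induct)
  case zero
  then show ?case by (simp add: pmult_pzero_left ideal_gen.zero)
next
  case (gen r x y)
  then have "pmult (pmult x r) (pmult y z) \<in> ideal_gen R"
    by (simp add: ideal_gen.gen pmult_kQ)
  then show ?case
    by (simp add: pmult_assoc)
next
  case (add u w)
  then show ?case by (simp add: pmult_padd_left ideal_gen.add)
qed

lemma ideal_gen_generator: "r \<in> R \<Longrightarrow> r \<in> ideal_gen R"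
  using ideal_gen.gen[of r R pone pone] pone_kQ by (simp add: pmult_pone_left pmult_pone_right)

lemma ideal_gen_subset_kQ: "R \<subseteq> kQ \<Longrightarrow> ideal_gen R \<subseteq> kQ"
proof
  fix u assume "u \<in> ideal_gen R" "R \<subseteq> kQ"
  then show "u \<in> kQ"
  proof (induction rule: ideal_gen.induct)
    case zero
    then show ?case by (simp add: kQ_def pzero_def)
  qed (auto simp: pmult_kQ padd_kQ)
qed

lemma alg_hom_kQD:
  assumes "alg_hom_kQ F"
  shows "x \<in> kQ \<Longrightarrow> F x \<in> kQ"
    and "x \<in> kQ \<Longrightarrow> y \<in> kQ \<Longrightarrow> F (padd x y) = padd (F x) (F y)"
    and "x \<in> kQ \<Longrightarrow> F (psmult c x) = psmult c (F x)"
    and "x \<in> kQ \<Longrightarrow> y \<in> kQ \<Longrightarrow> F (pmult x y) = pmult (F x) (F y)"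
    and "F pone = pone"
  using assms unfolding alg_hom_kQ_def by auto

lemma alg_hom_kQ_pzero:
  assumes "alg_hom_kQ F"
  shows "F pzero = pzero"
proof -
  have "F pzero = F (psmult 0 pone)"
    by (simp add: pzero_def psmult_def)
  also have "\<dots> = psmult 0 (F pone)"
    by (rule alg_hom_kQD(3)[OF assms pone_kQ])
  finally show ?thesis
    by (simp add: pzero_def psmult_def)
qed

lemma alg_hom_kQ_ideal_gen_image:
  assumes F: "alg_hom_kQ F" and R: "R \<subseteq> kQ" and gens: "F ` R \<subseteq> ideal_gen S"
    and u: "u \<in> ideal_gen R"
  shows "F u \<in> ideal_gen S"
  using u
proof (induction rule: ideal_gen.induct)
  case zero
  then show ?case by (simp add: alg_hom_kQ_pzero[OF F] ideal_gen.zero)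
next
  case (gen r x y)
  then have "F (pmult (pmult x r) y) = pmult (pmult (F x) (F r)) (F y)"
    using R by (auto simp: alg_hom_kQD[OF F] pmult_kQ)
  moreover have "pmult (pmult (F x) (F r)) (F y) \<in> ideal_gen S"
    using gen gens by (auto intro: ideal_gen_pmult_left ideal_gen_pmult_right alg_hom_kQD(1)[OF F])
  ultimately show ?case by simp
next
  case (add u w)
  moreover have "u \<in> kQ" "w \<in> kQ"
    using add.hyps ideal_gen_subset_kQ[OF R] by auto
  ultimately show ?case
    by (simp add: alg_hom_kQD(2)[OF F] ideal_gen.add)
qed

lemma inverse_alg_homs_induce_iso:
  assumes F: "alg_hom_kQ F" and H: "\<And>y. y \<in> kQ \<Longrightarrow> H y \<in> kQ"
    and HF: "\<And>x. H (F x) = x" and FH: "\<And>y. F (H y) = y"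
    and F_rel: "\<And>x. x \<in> relI q \<Longrightarrow> F x \<in> relI q'"
    and H_rel: "\<And>y. y \<in> relI q' \<Longrightarrow> H y \<in> relI q"
  shows "induces_iso q q' F"
proof -
  have "x \<in> relI q" if "F x \<in> relI q'" for x
    using H_rel[OF that] by (simp add: HF)
  moreover have "\<exists>x\<in>kQ. psub (F x) y \<in> relI q'" if "y \<in> kQ" for y
  proof
    show "psub (F (H y)) y \<in> relI q'"
      by (simp add: FH psub_self relI_def ideal_gen.zero)
  qed (rule H[OF that])
  ultimately show ?thesis
    unfolding induces_iso_def using F F_rel by blast
qed

section \<open>Twisted relabellings of the quiver\<close>

definition quiver_involution :: "(vert \<Rightarrow> vert) \<Rightarrow> (arr \<Rightarrow> arr) \<Rightarrow> bool" where
  "quiver_involution \<tau> \<sigma> \<longleftrightarrow> (\<forall>v. \<tau> (\<tau> v) = v) \<and> (\<forall>x. \<sigma> (\<sigma> x) = x)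
     \<and> (\<forall>x. src (\<sigma> x) = \<tau> (src x)) \<and> (\<forall>x. tgt (\<sigma> x) = \<tau> (tgt x))"

text \<open>On generators, \<open>relabel \<tau> \<sigma> k z\<close> sends each vertex \<open>v\<close> to \<open>\<tau> v\<close> and each arrow \<open>x\<close> to
  \<open>\<sigma> x\<close>, except that \<open>\<sigma> z\<close> is sent to \<open>k z\<close> (see \<open>relabel_basis\<close>).\<close>

definition relabel :: "(vert \<Rightarrow> vert) \<Rightarrow> (arr \<Rightarrow> arr) \<Rightarrow> 'k::field \<Rightarrow> arr \<Rightarrow> (path \<Rightarrow> 'k) \<Rightarrow> path \<Rightarrow> 'k"
  where "relabel \<tau> \<sigma> k z f = (\<lambda>(w, ys). k ^ count_list ys z * f (\<tau> w, map \<sigma> ys))"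

context
  fixes \<tau> :: "vert \<Rightarrow> vert" and \<sigma> :: "arr \<Rightarrow> arr"
  assumes invol: "quiver_involution \<tau> \<sigma>"
begin

lemma involution_vert: "\<tau> (\<tau> v) = v"
  using invol by (simp add: quiver_involution_def)

lemma involution_arr: "\<sigma> (\<sigma> x) = x"
  using invol by (simp add: quiver_involution_def)

lemma pend_map_involution: "pend (\<tau> w) (map \<sigma> ys) = \<tau> (pend w ys)"
  using invol by (induction ys arbitrary: w) (auto simp: quiver_involution_def)

lemma composable_map_involution: "composable (\<tau> w) (map \<sigma> ys) = composable w ys"
proof (induction ys arbitrary: w)
  case (Cons y ys)
  have "\<tau> v = \<tau> v' \<longleftrightarrow> v = v'" for v v'
    by (metis involution_vert)
  with Cons invol show ?case
    by (auto simp: quiver_involution_def)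
qed simp

lemma comp_involution_arr: "\<sigma> \<circ> \<sigma> = id"
  by (simp add: fun_eq_iff involution_arr)

lemma count_list_map_involution: "count_list (map \<sigma> ys) z = count_list ys (\<sigma> z)"
proof -
  have "\<sigma> y = z \<longleftrightarrow> y = \<sigma> z" for y
    by (metis involution_arr)
  then show ?thesis
    by (induction ys) simp_all
qed

lemma relabel_kQ:
  assumes f: "f \<in> kQ"
  shows "relabel \<tau> \<sigma> k z f \<in> kQ"
proof -
  let ?swap = "\<lambda>(w, ys). (\<tau> w, map \<sigma> ys)"
  have support: "{p. relabel \<tau> \<sigma> k z f p \<noteq> 0} \<subseteq> ?swap ` {p. f p \<noteq> 0}"
  proof clarify
    fix w ys assume "relabel \<tau> \<sigma> k z f (w, ys) \<noteq> 0"
    then have "f (\<tau> w, map \<sigma> ys) \<noteq> 0"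
      by (simp add: relabel_def)
    then show "(w, ys) \<in> ?swap ` {p. f p \<noteq> 0}"
      by (intro image_eqI[where x="(\<tau> w, map \<sigma> ys)"]) (simp_all add: involution_vert comp_involution_arr)
  qed
  have "valid_path (w, ys)" if "relabel \<tau> \<sigma> k z f (w, ys) \<noteq> 0" for w ys
  proof -
    from that have "f (\<tau> w, map \<sigma> ys) \<noteq> 0"
      by (simp add: relabel_def)
    with f have "composable (\<tau> w) (map \<sigma> ys)"
      by (auto simp: kQ_def valid_path_def)
    then show ?thesis
      by (simp add: valid_path_def composable_map_involution)
  qed
  moreover have "finite {p. f p \<noteq> 0}"
    using f by (simp add: kQ_def)
  ultimately show ?thesis
    unfolding kQ_def using finite_subset[OF support] by auto
qed

lemma relabel_pmult: "relabel \<tau> \<sigma> k z (pmult f h) = pmult (relabel \<tau> \<sigma> k z f) (relabel \<tau> \<sigma> k z h)"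
proof (intro ext, clarify)
  fix w ys
  have split_power: "k ^ count_list ys z = k ^ count_list (take i ys) z * k ^ count_list (drop i ys) z"
    for i
    by (metis append_take_drop_id count_list_append power_add)
  have "relabel \<tau> \<sigma> k z (pmult f h) (w, ys) = k ^ count_list ys z *
     (\<Sum>i\<le>length ys. f (\<tau> w, take i (map \<sigma> ys)) * h (pend (\<tau> w) (take i (map \<sigma> ys)), drop i (map \<sigma> ys)))"
    by (simp add: relabel_def pmult_def)
  also have "\<dots> = (\<Sum>i\<le>length ys. k ^ count_list (take i ys) z * f (\<tau> w, map \<sigma> (take i ys)) *
      (k ^ count_list (drop i ys) z * h (\<tau> (pend w (take i ys)), map \<sigma> (drop i ys))))"
    unfolding sum_distrib_left
    apply (rule sum.cong[OF refl])
    subgoal for i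
      using split_power[of i] by (simp add: take_map drop_map pend_map_involution ac_simps)
    done
  also have "\<dots> = pmult (relabel \<tau> \<sigma> k z f) (relabel \<tau> \<sigma> k z h) (w, ys)"
    by (simp add: relabel_def pmult_def)
  finally show "relabel \<tau> \<sigma> k z (pmult f h) (w, ys) = pmult (relabel \<tau> \<sigma> k z f) (relabel \<tau> \<sigma> k z h) (w, ys)" .
qed

lemma relabel_basis:
  "relabel \<tau> \<sigma> k z (basis (v, xs)) = psmult (k ^ count_list (map \<sigma> xs) z) (basis (\<tau> v, map \<sigma> xs))"
proof (intro ext, clarify)
  fix w ys
  have "(\<tau> w, map \<sigma> ys) = (v, xs) \<longleftrightarrow> (w, ys) = (\<tau> v, map \<sigma> xs)"
    by (metis involution_vert comp_involution_arr list.map_comp list.map_id prod.inject)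
  then show "relabel \<tau> \<sigma> k z (basis (v, xs)) (w, ys) =
      psmult (k ^ count_list (map \<sigma> xs) z) (basis (\<tau> v, map \<sigma> xs)) (w, ys)"
    unfolding relabel_def psmult_def basis_def by auto
qed

lemma relabel_relabel:
  assumes "\<sigma> z = z'" and "k' * k = 1"
  shows "relabel \<tau> \<sigma> k' z' (relabel \<tau> \<sigma> k z f) = f"
proof (intro ext, clarify)
  fix w ys
  have "relabel \<tau> \<sigma> k' z' (relabel \<tau> \<sigma> k z f) (w, ys) =
      k' ^ count_list ys z' * (k ^ count_list ys z' * f (w, ys))"
    using assms by (simp add: relabel_def count_list_map_involution involution_vert comp_involution_arr)
  also have "\<dots> = (k' * k) ^ count_list ys z' * f (w, ys)"
    by (simp add: power_mult_distrib)
  finally show "relabel \<tau> \<sigma> k' z' (relabel \<tau> \<sigma> k z f) (w, ys) = f (w, ys)"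
    using assms by simp
qed

end

lemma relabel_padd: "relabel \<tau> \<sigma> k z (padd f h) = padd (relabel \<tau> \<sigma> k z f) (relabel \<tau> \<sigma> k z h)"
  by (auto simp: relabel_def padd_def fun_eq_iff distrib_left)

lemma relabel_psub: "relabel \<tau> \<sigma> k z (psub f h) = psub (relabel \<tau> \<sigma> k z f) (relabel \<tau> \<sigma> k z h)"
  by (auto simp: relabel_def psub_def fun_eq_iff right_diff_distrib)

lemma relabel_psmult: "relabel \<tau> \<sigma> k z (psmult c f) = psmult c (relabel \<tau> \<sigma> k z f)"
  by (auto simp: relabel_def psmult_def fun_eq_iff)

lemma relabel_pone: "relabel \<tau> \<sigma> k z pone = pone"
  by (auto simp: relabel_def pone_def fun_eq_iff)

lemma relabel_alg_hom_kQ: "quiver_involution \<tau> \<sigma> \<Longrightarrow> alg_hom_kQ (relabel \<tau> \<sigma> k z)"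
  unfolding alg_hom_kQ_def
  by (simp add: relabel_kQ relabel_padd relabel_psmult relabel_pmult relabel_pone)

definition rel_ab :: "path \<Rightarrow> 'k::field" where
  "rel_ab = psub (pmult ga gb) (pmult gc gd)"

definition rel_ba :: "'k::field \<Rightarrow> path \<Rightarrow> 'k" where
  "rel_ba q = psub (pmult gb ga) (psmult q (pmult gd gc))"

lemma relI_eq: "relI q = ideal_gen {rel_ab, rel_ba q}"
  by (simp add: relI_def rel_ab_def rel_ba_def)

lemma relations_kQ: "{rel_ab, rel_ba q} \<subseteq> kQ"
  by (simp add: rel_ab_def rel_ba_def ga_def gb_def gc_def gd_def
      psub_kQ pmult_kQ psmult_kQ basis_kQ valid_path_def)

lemma psmult_relation_in_relI: "r \<in> {rel_ab, rel_ba q} \<Longrightarrow> psmult c r \<in> relI q"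
  unfolding relI_eq by (intro ideal_gen_psmult ideal_gen_generator)

lemma relabel_induces_iso:
  assumes invol: "quiver_involution \<tau> \<sigma>" and "\<sigma> z = z'" and "k * k' = 1"
    and F_rel: "relabel \<tau> \<sigma> k z ` {rel_ab, rel_ba q} \<subseteq> relI q'"
    and H_rel: "relabel \<tau> \<sigma> k' z' ` {rel_ab, rel_ba q'} \<subseteq> relI q"
  shows "induces_iso q q' (relabel \<tau> \<sigma> k z)"
proof (rule inverse_alg_homs_induce_iso)
  have "\<sigma> z' = z"
    using assms by (metis involution_arr)
  then show "relabel \<tau> \<sigma> k' z' (relabel \<tau> \<sigma> k z x) = x"
    and "relabel \<tau> \<sigma> k z (relabel \<tau> \<sigma> k' z' y) = y" for x y
    using assms by (simp_all add: relabel_relabel mult.commute)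
  show "relabel \<tau> \<sigma> k z x \<in> relI q'" if "x \<in> relI q" for x
    using that F_rel unfolding relI_eq
    by (intro alg_hom_kQ_ideal_gen_image[OF relabel_alg_hom_kQ[OF invol] relations_kQ])
  show "relabel \<tau> \<sigma> k' z' y \<in> relI q" if "y \<in> relI q'" for y
    using that H_rel unfolding relI_eq
    by (intro alg_hom_kQ_ideal_gen_image[OF relabel_alg_hom_kQ[OF invol] relations_kQ])
qed (simp_all add: relabel_alg_hom_kQ relabel_kQ invol)

section \<open>The isomorphisms \<open>\<phi>\<close> and \<open>\<psi>\<close>\<close>

fun phi_arr :: "arr \<Rightarrow> arr" where
  "phi_arr Aa = Ac" | "phi_arr Ab = Ad" | "phi_arr Ac = Aa" | "phi_arr Ad = Ab"

fun psi_arr :: "arr \<Rightarrow> arr" where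
  "psi_arr Aa = Ab" | "psi_arr Ab = Aa" | "psi_arr Ac = Ad" | "psi_arr Ad = Ac"

fun swap_vert :: "vert \<Rightarrow> vert" where
  "swap_vert V1 = V2" | "swap_vert V2 = V1"

lemma quiver_involution_phi: "quiver_involution id phi_arr"
  unfolding quiver_involution_def by (intro conjI allI; rename_tac y; case_tac y; simp)

lemma quiver_involution_psi: "quiver_involution swap_vert psi_arr"
  unfolding quiver_involution_def by (intro conjI allI; rename_tac y; case_tac y; simp)

lemmas relabel_simps =
  relabel_psub relabel_psmult pmult_psmult_left pmult_psmult_right
  relabel_pmult[OF quiver_involution_phi] relabel_basis[OF quiver_involution_phi]
  relabel_pmult[OF quiver_involution_psi] relabel_basis[OF quiver_involution_psi]
  ga_def gb_def gc_def gd_def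

lemma phi_relations:
  fixes q :: "'k::field"
  assumes "q \<noteq> 0"
  shows "relabel id phi_arr 1 z rel_ab = psmult (-1) (rel_ab :: path \<Rightarrow> 'k)"
    and "relabel id phi_arr 1 z (rel_ba q) = psmult (- q) (rel_ba (inverse q))"
  using assms by (simp_all add: rel_ab_def rel_ba_def relabel_simps psmult_one,
      simp_all add: psub_def psmult_def fun_eq_iff field_simps)

text \<open>Rescaling either \<open>a\<close> or \<open>b\<close> works: with \<open>z = Aa\<close> and \<open>k = q\<inverse>\<close> this covers the inverse
  of \<open>\<psi>\<close>.\<close>

lemma psi_relations:
  fixes k :: "'k::field"
  assumes "k \<noteq> 0" and "z \<in> {Aa, Ab}"
  shows "relabel swap_vert psi_arr k z rel_ab = psmult k (rel_ba (inverse k))"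
    and "relabel swap_vert psi_arr k z (rel_ba k) = psmult k rel_ab"
  using assms by (auto simp: rel_ab_def rel_ba_def relabel_simps psmult_one,
      auto simp: psub_def psmult_def fun_eq_iff field_simps)

lemma phi_maps_relations:
  "q \<noteq> 0 \<Longrightarrow> relabel id phi_arr 1 z ` {rel_ab, rel_ba q} \<subseteq> relI (inverse q)"
  by (simp add: phi_relations psmult_relation_in_relI)

lemma psi_maps_relations:
  "k \<noteq> 0 \<Longrightarrow> z \<in> {Aa, Ab} \<Longrightarrow> relabel swap_vert psi_arr k z ` {rel_ab, rel_ba k} \<subseteq> relI (inverse k)"
  by (simp add: psi_relations psmult_relation_in_relI)

theorem lemma3p5:
  fixes q :: "'k::field_char_0"
  assumes alg_closed: "\<forall>p :: 'k poly. degree p > 0 \<longrightarrow> (\<exists>x. poly p x = 0)"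
    and q_unit: "q \<noteq> 0"
  shows "(\<exists>F. induces_iso q (inverse q) F
              \<and> F e1 = e1 \<and> F e2 = e2
              \<and> F ga = gc \<and> F gb = gd \<and> F gc = ga \<and> F gd = gb)
       \<and> (\<exists>G. induces_iso q (inverse q) G
              \<and> G e1 = e2 \<and> G e2 = e1
              \<and> G ga = psmult q gb \<and> G gb = ga \<and> G gc = gd \<and> G gd = gc)"
proof (intro conjI exI)
  let ?F = "relabel id phi_arr (1::'k) Aa"
  have "relabel id phi_arr 1 Ac ` {rel_ab, rel_ba (inverse q)} \<subseteq> relI q"
    using phi_maps_relations[of "inverse q"] q_unit by simp
  then show "induces_iso q (inverse q) ?F"
    using q_unit by (intro relabel_induces_iso[OF quiver_involution_phi] phi_maps_relations) simp_all
  show "?F e1 = e1" "?F e2 = e2" "?F ga = gc" "?F gb = gd" "?F gc = ga" "?F gd = gb"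
    by (simp_all add: e1_def e2_def relabel_simps psmult_one)
next
  let ?G = "relabel swap_vert psi_arr q Ab"
  have "relabel swap_vert psi_arr (inverse q) Aa ` {rel_ab, rel_ba (inverse q)} \<subseteq> relI q"
    using psi_maps_relations[of "inverse q" Aa] q_unit by simp
  then show "induces_iso q (inverse q) ?G"
    using q_unit by (intro relabel_induces_iso[OF quiver_involution_psi] psi_maps_relations) simp_all
  show "?G e1 = e2" "?G e2 = e1" "?G ga = psmult q gb" "?G gb = ga" "?G gc = gd" "?G gd = gc"
    by (simp_all add: e1_def e2_def relabel_simps psmult_one)
qed

end
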